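(* Let $\{\varphi_n\}$ be a generalized Riesz system in a Hilbert space $\mathcal H$ with constructing pair $(\{e_n\},T)$, and put $\psi^T_n=(T^{-1})^*e_n$, $n\ge0$. Then $(\{\varphi_n\},\{\psi^T_n\})$ is a $(D(T^* ),D(T^{-1}))$-quasi basis, and $T=\big(T_{e,\psi^T}|_{D(T^{-1})}\big)^{-1}$, $(T^{-1})^*=\big(T_{e,\varphi}|_{D(T^* )}\big)^{-1}$.
   Context: A sequence $\{\varphi_n\}$ is a generalized Riesz system if there exist an ONB $\{e_n\}$ and a densely defined closed operator $T$ with densely defined inverse such that $e_n\in D(T)\cap D((T^{-1})^* )$ and $Te_n=\varphi_n$ for all $n$; $(\{e_n\},T)$ is a constructing pair. Inner product linear in the first argument. For a sequence $\{\chi_n\}$, $D(\chi)=\{x:\sum_n|\langle x,\chi_n\rangle|^2<\infty\}$ and $D_\chi$ is its linear span; $T_{e,\chi}$ is the operator with domain $D(\chi)$, $T_{e,\chi}x=\sum_n\langle x,\chi_n\rangle e_n$. For biorthogonal sequences $\{\varphi_n\},\{\psi_n\}$ (i.e. $\langle\varphi_n,\psi_m\rangle=\delta_{nm}$) and dense subspaces $\mathcal D,\mathcal E$ with $D_\psi\subseteq\mathcal D\subseteq D(\varphi)$, $D_\varphi\subseteq\mathcal E\subseteq D(\psi)$, the pair is a $(\mathcal D,\mathcal E)$-quasi basis if $\sum_k\langle x,\varphi_k\rangle\langle\psi_k,y\rangle=\langle x,y\rangle$ for all $x\in\mathcal D$, $y\in\mathcal E$. *)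

theory Defs
  imports "HOL-Analysis.Analysis"
begin

class chilbert = banach +
  fixes cscale :: "complex \<Rightarrow> 'a \<Rightarrow> 'a"
    and cinner :: "'a \<Rightarrow> 'a \<Rightarrow> complex"
  assumes cscale_add_right: "cscale a (x + y) = cscale a x + cscale a y"
    and cscale_add_left: "cscale (a + b) x = cscale a x + cscale b x"
    and cscale_cscale: "cscale a (cscale b x) = cscale (a * b) x"
    and cscale_one: "cscale 1 x = x"
    and scaleR_cscale: "scaleR r x = cscale (complex_of_real r) x"
    and cinner_add_left: "cinner (x + y) z = cinner x z + cinner y z"
    and cinner_cscale_left: "cinner (cscale a x) y = a * cinner x y"
    and cinner_commute: "cinner y x = cnj (cinner x y)"
    and cinner_self: "cinner x x = complex_of_real ((norm x)\<^sup>2)"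

text \<open>A (possibly unbounded) operator on H is represented by its graph, a
relation G on H.\<close>

definition csubspace :: "'a::chilbert set \<Rightarrow> bool" where
  "csubspace S \<longleftrightarrow> 0 \<in> S \<and> (\<forall>x\<in>S. \<forall>y\<in>S. x + y \<in> S) \<and> (\<forall>a x. x \<in> S \<longrightarrow> cscale a x \<in> S)"

definition cspan :: "'a::chilbert set \<Rightarrow> 'a set" where
  "cspan A = {x. \<exists>F c. finite F \<and> F \<subseteq> A \<and> x = (\<Sum>a\<in>F. cscale (c a) a)}"

definition lin_op :: "('a::chilbert \<times> 'a) set \<Rightarrow> bool" where
  "lin_op G \<longleftrightarrow> (0, 0) \<in> G
     \<and> (\<forall>x y u v. (x, y) \<in> G \<longrightarrow> (u, v) \<in> G \<longrightarrow> (x + u, y + v) \<in> G)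
     \<and> (\<forall>a x y. (x, y) \<in> G \<longrightarrow> (cscale a x, cscale a y) \<in> G)
     \<and> (\<forall>x y z. (x, y) \<in> G \<longrightarrow> (x, z) \<in> G \<longrightarrow> y = z)"

definition dom_op :: "('a \<times> 'a) set \<Rightarrow> 'a set" where
  "dom_op G = Domain G"

definition densely_defined :: "('a::chilbert \<times> 'a) set \<Rightarrow> bool" where
  "densely_defined G \<longleftrightarrow> closure (dom_op G) = UNIV"

definition closed_op :: "('a::chilbert \<times> 'a) set \<Rightarrow> bool" where
  "closed_op G \<longleftrightarrow> closed G"

text \<open>Inverse operator: converse graph (an operator iff G is injective).\<close>
definition inv_op :: "('a \<times> 'a) set \<Rightarrow> ('a \<times> 'a) set" where
  "inv_op G = converse G"

definition injective_op :: "('a::chilbert \<times> 'a) set \<Rightarrow> bool" where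
  "injective_op G \<longleftrightarrow> (\<forall>x y z. (x, z) \<in> G \<longrightarrow> (y, z) \<in> G \<longrightarrow> x = y)"

definition adj_op :: "('a::chilbert \<times> 'a) set \<Rightarrow> ('a \<times> 'a) set" where
  "adj_op G = {(y, z). \<forall>x w. (x, w) \<in> G \<longrightarrow> cinner w y = cinner x z}"

definition restrict_op :: "('a \<times> 'a) set \<Rightarrow> 'a set \<Rightarrow> ('a \<times> 'a) set" where
  "restrict_op G A = {(x, y). (x, y) \<in> G \<and> x \<in> A}"

definition ONB :: "(nat \<Rightarrow> 'a::chilbert) \<Rightarrow> bool" where
  "ONB e \<longleftrightarrow> (\<forall>n m. cinner (e n) (e m) = (if n = m then 1 else 0))
     \<and> (\<forall>x. (\<forall>n. cinner x (e n) = 0) \<longrightarrow> x = 0)"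

definition constructing_pair :: "(nat \<Rightarrow> 'a::chilbert) \<Rightarrow> ('a \<times> 'a) set \<Rightarrow> (nat \<Rightarrow> 'a) \<Rightarrow> bool" where
  "constructing_pair e T \<phi> \<longleftrightarrow> ONB e \<and> lin_op T \<and> densely_defined T \<and> closed_op T
     \<and> injective_op T \<and> densely_defined (inv_op T)
     \<and> (\<forall>n. e n \<in> dom_op T \<inter> dom_op (adj_op (inv_op T)) \<and> (e n, \<phi> n) \<in> T)"

definition gen_Riesz_system :: "(nat \<Rightarrow> 'a::chilbert) \<Rightarrow> bool" where
  "gen_Riesz_system \<phi> \<longleftrightarrow> (\<exists>e T. constructing_pair e T \<phi>)"

definition Dseq :: "(nat \<Rightarrow> 'a::chilbert) \<Rightarrow> 'a set" where
  "Dseq xs = {x. summable (\<lambda>n. (cmod (cinner x (xs n)))\<^sup>2)}"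

definition Dspan :: "(nat \<Rightarrow> 'a::chilbert) \<Rightarrow> 'a set" where
  "Dspan xs = cspan (range xs)"

definition T_op :: "(nat \<Rightarrow> 'a::chilbert) \<Rightarrow> (nat \<Rightarrow> 'a) \<Rightarrow> ('a \<times> 'a) set" where
  "T_op e xs = {(x, \<Sum>n. cscale (cinner x (xs n)) (e n)) | x. x \<in> Dseq xs}"

definition biorthogonal :: "(nat \<Rightarrow> 'a::chilbert) \<Rightarrow> (nat \<Rightarrow> 'a) \<Rightarrow> bool" where
  "biorthogonal \<phi> \<psi> \<longleftrightarrow> (\<forall>n m. cinner (\<phi> n) (\<psi> m) = (if n = m then 1 else 0))"

definition dense_csubspace :: "'a::chilbert set \<Rightarrow> bool" where
  "dense_csubspace S \<longleftrightarrow> csubspace S \<and> closure S = UNIV"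

definition quasi_basis :: "'a::chilbert set \<Rightarrow> 'a set \<Rightarrow> (nat \<Rightarrow> 'a) \<Rightarrow> (nat \<Rightarrow> 'a) \<Rightarrow> bool" where
  "quasi_basis \<D> \<E> \<phi> \<psi> \<longleftrightarrow> biorthogonal \<phi> \<psi>
     \<and> dense_csubspace \<D> \<and> dense_csubspace \<E>
     \<and> Dspan \<psi> \<subseteq> \<D> \<and> \<D> \<subseteq> Dseq \<phi>
     \<and> Dspan \<phi> \<subseteq> \<E> \<and> \<E> \<subseteq> Dseq \<psi>
     \<and> (\<forall>x\<in>\<D>. \<forall>y\<in>\<E>. (\<lambda>k. cinner x (\<phi> k) * cinner (\<psi> k) y) sums cinner x y)"

end

theory Submission
  imports Defs
begin

(*
  Write psi_n = (T^-1)^* e_n.  For (a, b) in the graph of T we have <b, psi_n> = <a, e_n>, and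
  for (y, z) in the graph of T^* we have <y, phi_n> = <z, e_n>.  So the coefficients of b
  against psi, and of y against phi, are the Fourier coefficients of a = T^-1 b and of
  z = T^* y in the basis e; expanding in e gives both operator identities.  For x in the
  domain of T^* and y in the range of T, the quasi-basis expansion of <x, y> = <T^* x, T^-1 y>
  is Parseval's identity.  The domain of T^* is dense because T is closed: a vector orthogonal
  to it is killed by projecting onto the closed graph of T in H x H.
*)

section \<open>Complex inner product spaces\<close>

lemma cinner_zero_left [simp]: "cinner 0 (y::'a::chilbert) = 0"
  by (metis add_cancel_right_right cinner_add_left)

lemma cinner_zero_right [simp]: "cinner (y::'a::chilbert) 0 = 0"
  by (metis cinner_commute cinner_zero_left complex_cnj_zero)

lemma cinner_add_right: "cinner x (y + z) = cinner x y + cinner x (z::'a::chilbert)"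
  by (metis cinner_add_left cinner_commute complex_cnj_add)

lemma cinner_cscale_right: "cinner x (cscale a y) = cnj a * cinner x (y::'a::chilbert)"
  by (metis cinner_commute cinner_cscale_left complex_cnj_mult)

lemma cinner_minus_left: "cinner (- x) y = - cinner x (y::'a::chilbert)"
  by (metis add.right_inverse cinner_add_left cinner_zero_left eq_neg_iff_add_eq_0)

lemma cinner_minus_right: "cinner y (- x) = - cinner y (x::'a::chilbert)"
  by (metis cinner_commute cinner_minus_left complex_cnj_minus)

lemma cinner_diff_left: "cinner (x - z) y = cinner x y - cinner z (y::'a::chilbert)"
  unfolding diff_conv_add_uminus cinner_add_left cinner_minus_left by simp

lemma cinner_diff_right: "cinner y (x - z) = cinner y x - cinner y (z::'a::chilbert)"
  unfolding diff_conv_add_uminus cinner_add_right cinner_minus_right by simp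

lemma cinner_scaleR_left: "cinner (r *\<^sub>R x) y = r *\<^sub>R cinner x (y::'a::chilbert)"
  by (simp add: scaleR_cscale cinner_cscale_left scaleR_conv_of_real)

lemma cinner_scaleR_right: "cinner y (r *\<^sub>R x) = r *\<^sub>R cinner y (x::'a::chilbert)"
  by (simp add: scaleR_cscale cinner_cscale_right scaleR_conv_of_real)

lemma cinner_sum_left: "cinner (\<Sum>i\<in>F. f i) y = (\<Sum>i\<in>F. cinner (f i) (y::'a::chilbert))"
  by (induction F rule: infinite_finite_induct) (auto simp: cinner_add_left)

lemma cinner_sum_right: "cinner y (\<Sum>i\<in>F. f i) = (\<Sum>i\<in>F. cinner y (f i::'a::chilbert))"
  by (induction F rule: infinite_finite_induct) (auto simp: cinner_add_right)

lemmas cinner_simps = cinner_add_left cinner_add_right cinner_cscale_left cinner_cscale_right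
  cinner_minus_left cinner_minus_right cinner_diff_left cinner_diff_right
  cinner_sum_left cinner_sum_right cinner_scaleR_left cinner_scaleR_right

lemma Re_cinner_self: "Re (cinner x x) = (norm (x::'a::chilbert))\<^sup>2"
  by (simp add: cinner_self)

lemma norm_cscale: "norm (cscale a x) = cmod a * norm (x::'a::chilbert)"
proof -
  have "complex_of_real ((norm (cscale a x))\<^sup>2) = a * cnj a * cinner x x"
    by (simp add: cinner_self [symmetric] cinner_simps del: of_real_power)
  also have "\<dots> = complex_of_real ((cmod a * norm x)\<^sup>2)"
    using complex_norm_square [of a] by (simp add: cinner_self power_mult_distrib)
  finally have "(norm (cscale a x))\<^sup>2 = (cmod a * norm x)\<^sup>2"
    using of_real_eq_iff by blast
  then show ?thesis
    by (simp add: power2_eq_iff_nonneg)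
qed

lemma bounded_linear_cscale: "bounded_linear (cscale a :: 'a::chilbert \<Rightarrow> 'a)"
proof (rule bounded_linear_intro [where K = "cmod a"])
  fix x y :: 'a and r :: real
  show "cscale a (x + y) = cscale a x + cscale a y"
    by (rule cscale_add_right)
  show "cscale a (r *\<^sub>R x) = r *\<^sub>R cscale a x"
    by (simp add: scaleR_cscale cscale_cscale mult.commute)
  show "norm (cscale a x) \<le> norm x * cmod a"
    by (simp add: norm_cscale mult.commute)
qed

lemma Cauchy_Schwarz_cinner: "cmod (cinner x y) \<le> norm x * norm (y::'a::chilbert)"
proof (cases "y = 0")
  case True
  then show ?thesis by simp
next
  case False
  define N where "N = (norm y)\<^sup>2"
  define a where "a = cinner x y"
  have "N > 0"
    using False by (simp add: N_def)
  have "cinner (cscale (of_real N) x - cscale a y) (cscale (of_real N) x - cscale a y)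
      = of_real N * of_real N * cinner x x - of_real N * cnj a * cinner x y
        - a * of_real N * cinner y x + a * cnj a * cinner y y"
    by (simp add: cinner_simps algebra_simps)
  also have "\<dots> = of_real N * (of_real N * cinner x x - a * cnj a)"
    using cinner_commute [of x y] by (simp add: a_def N_def cinner_self algebra_simps)
  also have "\<dots> = of_real (N * (N * (norm x)\<^sup>2 - (cmod a)\<^sup>2))"
    using complex_norm_square [of a] by (simp add: cinner_self)
  finally have "0 \<le> N * (N * (norm x)\<^sup>2 - (cmod a)\<^sup>2)"
    by (metis Re_cinner_self Re_complex_of_real zero_le_power2)
  with \<open>N > 0\<close> have "(cmod a)\<^sup>2 \<le> (norm x * norm y)\<^sup>2"
    by (simp add: N_def zero_le_mult_iff power_mult_distrib mult.commute)
  then show ?thesis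
    unfolding a_def by (rule power2_le_imp_le) simp
qed

lemma bounded_bilinear_cinner: "bounded_bilinear (cinner :: 'a::chilbert \<Rightarrow> 'a \<Rightarrow> complex)"
proof (rule bounded_bilinear.intro)
  show "\<exists>K. \<forall>a b. norm (cinner a b) \<le> norm a * norm (b::'a) * K"
    by (rule exI [of _ 1]) (simp add: Cauchy_Schwarz_cinner)
qed (simp_all only: cinner_add_left cinner_add_right cinner_scaleR_left cinner_scaleR_right)

lemma parallelogram_law:
  "(norm (u + v))\<^sup>2 + (norm (u - v))\<^sup>2 = 2 * (norm u)\<^sup>2 + 2 * (norm (v::'a::chilbert))\<^sup>2"
  unfolding Re_cinner_self [symmetric] by (simp add: cinner_simps)

lemma norm_diff_scaleR_sq:
  "(norm (z - t *\<^sub>R w))\<^sup>2 = (norm z)\<^sup>2 - 2 * t * Re (cinner z w) + t\<^sup>2 * (norm (w::'a::chilbert))\<^sup>2"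
proof -
  have "Re (cinner w z) = Re (cinner z w)"
    by (subst cinner_commute) simp
  then show ?thesis
    unfolding Re_cinner_self [symmetric]
    by (simp add: cinner_simps scaleR_conv_of_real power2_eq_square algebra_simps)
qed

instantiation prod :: (chilbert, chilbert) chilbert
begin

definition cscale_prod_def: "cscale a x = (cscale a (fst x), cscale a (snd x))"

definition cinner_prod_def: "cinner x y = cinner (fst x) (fst y) + cinner (snd x) (snd y)"

instance
proof
  fix a b :: complex and x y z :: "'a \<times> 'b" and r :: real
  show "cscale a (x + y) = cscale a x + cscale a y"
    by (simp add: cscale_prod_def cscale_add_right)
  show "cscale (a + b) x = cscale a x + cscale b x"
    by (simp add: cscale_prod_def cscale_add_left)
  show "cscale a (cscale b x) = cscale (a * b) x"
    by (simp add: cscale_prod_def cscale_cscale)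
  show "cscale 1 x = x"
    by (simp add: cscale_prod_def cscale_one)
  show "r *\<^sub>R x = cscale (complex_of_real r) x"
    by (simp add: cscale_prod_def scaleR_cscale [symmetric] scaleR_prod_def)
  show "cinner (x + y) z = cinner x z + cinner y z"
    by (simp add: cinner_prod_def cinner_add_left)
  show "cinner (cscale a x) y = a * cinner x y"
    by (simp add: cinner_prod_def cscale_prod_def cinner_cscale_left algebra_simps)
  show "cinner y x = cnj (cinner x y)"
    by (simp add: cinner_prod_def cinner_commute [of "fst x"] cinner_commute [of "snd x"])
  show "cinner x x = complex_of_real ((norm x)\<^sup>2)"
    by (simp add: cinner_prod_def cinner_self norm_prod_def)
qed

end

lemma cinner_Pair: "cinner (a, b) (c, d) = cinner a c + cinner b d"
  by (simp add: cinner_prod_def)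

lemma csubspace_0: "csubspace S \<Longrightarrow> 0 \<in> S"
  by (simp add: csubspace_def)

lemma csubspace_add: "csubspace S \<Longrightarrow> x \<in> S \<Longrightarrow> y \<in> S \<Longrightarrow> x + y \<in> S"
  by (simp add: csubspace_def)

lemma csubspace_cscale: "csubspace S \<Longrightarrow> x \<in> S \<Longrightarrow> cscale a x \<in> S"
  by (simp add: csubspace_def)

lemma csubspace_scaleR: "csubspace S \<Longrightarrow> x \<in> S \<Longrightarrow> r *\<^sub>R x \<in> S"
  by (simp add: scaleR_cscale csubspace_cscale)

lemma csubspace_imp_convex: "csubspace S \<Longrightarrow> convex S"
  by (simp add: convex_def csubspace_add csubspace_scaleR)

lemma csubspace_sum:
  assumes "csubspace S" "\<And>a. a \<in> F \<Longrightarrow> f a \<in> S"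
  shows "sum f F \<in> S"
  using assms(2)
  by (induction F rule: infinite_finite_induct) (auto intro: csubspace_0 csubspace_add assms(1))

lemma cspan_subset:
  assumes "csubspace S" "A \<subseteq> S"
  shows "cspan A \<subseteq> S"
  using assms by (auto simp: cspan_def intro!: csubspace_sum csubspace_cscale)

lemma csubspace_closure:
  assumes "csubspace S"
  shows "csubspace (closure S)"
  unfolding csubspace_def
proof (intro conjI ballI allI impI)
  show "0 \<in> closure S"
    using assms closure_subset csubspace_0 by blast
next
  fix x y
  assume "x \<in> closure S" "y \<in> closure S"
  then obtain f g where "\<forall>n. f n \<in> S" "f \<longlonglongrightarrow> x" "\<forall>n. g n \<in> S" "g \<longlonglongrightarrow> y"
    unfolding closure_sequential by blast
  then show "x + y \<in> closure S"
    unfolding closure_sequential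
    by (intro exI [of _ "\<lambda>n. f n + g n"]) (auto intro: tendsto_add csubspace_add assms)
next
  fix a x
  assume "x \<in> closure S"
  then obtain f where "\<forall>n. f n \<in> S" "f \<longlonglongrightarrow> x"
    unfolding closure_sequential by blast
  then show "cscale a x \<in> closure S"
    unfolding closure_sequential
    by (intro exI [of _ "\<lambda>n. cscale a (f n)"])
      (auto intro: bounded_linear.tendsto [OF bounded_linear_cscale] csubspace_cscale assms)
qed

section \<open>Orthogonal projection\<close>

lemma Cauchy_if_dist_sq_le:
  fixes f :: "nat \<Rightarrow> 'a::metric_space"
  assumes bound: "\<And>m n. (dist (f m) (f n))\<^sup>2 \<le> g m + g n" and "g \<longlonglongrightarrow> 0"
  shows "Cauchy f"
proof (rule metric_CauchyI)
  fix e :: real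
  assume "e > 0"
  then have "e\<^sup>2 / 2 > 0"
    by simp
  then obtain N where "\<forall>n\<ge>N. norm (g n - 0) < e\<^sup>2 / 2"
    using LIMSEQ_D [OF \<open>g \<longlonglongrightarrow> 0\<close>] by blast
  then have N: "\<And>n. n \<ge> N \<Longrightarrow> g n < e\<^sup>2 / 2"
    by (auto dest: abs_less_iff [THEN iffD1])
  show "\<exists>N. \<forall>m\<ge>N. \<forall>n\<ge>N. dist (f m) (f n) < e"
  proof (intro exI allI impI)
    fix m n
    assume "m \<ge> N" "n \<ge> N"
    have "(dist (f m) (f n))\<^sup>2 < e\<^sup>2"
      using bound [of m n] N [OF \<open>m \<ge> N\<close>] N [OF \<open>n \<ge> N\<close>] by linarith
    then show "dist (f m) (f n) < e"
      using \<open>e > 0\<close> by (simp add: power_less_imp_less_base)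
  qed
qed

lemma dist_sq_midpoint:
  fixes p x y :: "'a::chilbert"
  shows "(dist x y)\<^sup>2 = 2 * (dist p x)\<^sup>2 + 2 * (dist p y)\<^sup>2 - 4 * (dist p (midpoint x y))\<^sup>2"
proof -
  have "(p - x) + (p - y) = 2 *\<^sub>R (p - midpoint x y)"
    by (simp add: midpoint_def algebra_simps scaleR_2)
  moreover have "(norm (2 *\<^sub>R (p - midpoint x y)))\<^sup>2 = 4 * (norm (p - midpoint x y))\<^sup>2"
    by (simp add: power2_eq_square)
  ultimately show ?thesis
    using parallelogram_law [of "p - x" "p - y"] by (simp add: dist_norm norm_minus_commute)
qed

lemma infdist_sq_approx:
  assumes "A \<noteq> {}" "\<delta> > 0"
  obtains a where "a \<in> A" "(dist x a)\<^sup>2 < (infdist x A)\<^sup>2 + \<delta>"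
proof -
  have "infdist x A < sqrt ((infdist x A)\<^sup>2 + \<delta>)"
    using \<open>\<delta> > 0\<close> by (intro real_less_rsqrt) simp
  then obtain a where "a \<in> A" "dist x a < sqrt ((infdist x A)\<^sup>2 + \<delta>)"
    using assms(1) by (auto simp: infdist_notempty cINF_less_iff intro: bdd_belowI2 [of _ 0])
  then have "(dist x a)\<^sup>2 < (sqrt ((infdist x A)\<^sup>2 + \<delta>))\<^sup>2"
    by (intro power_strict_mono) simp_all
  with \<open>a \<in> A\<close> \<open>\<delta> > 0\<close> show ?thesis
    by (intro that) simp_all
qed

lemma closed_convex_nearest_point:
  fixes M :: "'a::chilbert set"
  assumes "closed M" "convex M" "M \<noteq> {}"
  obtains m where "m \<in> M" "\<And>u. u \<in> M \<Longrightarrow> dist p m \<le> dist p u"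
proof -
  define d where "d = infdist p M"
  have "\<exists>a\<in>M. (dist p a)\<^sup>2 < d\<^sup>2 + inverse (real (Suc n))" for n
    using infdist_sq_approx [OF \<open>M \<noteq> {}\<close>, of "inverse (real (Suc n))" p] unfolding d_def by auto
  then obtain f where fM: "\<And>n. f n \<in> M" and fd: "\<And>n. (dist p (f n))\<^sup>2 < d\<^sup>2 + inverse (real (Suc n))"
    by metis
  have "Cauchy f"
  proof (rule Cauchy_if_dist_sq_le [where g = "\<lambda>n. 2 * inverse (real (Suc n))"])
    fix n k
    have "midpoint (f n) (f k) \<in> M"
      using convexD [OF \<open>convex M\<close> fM fM, of "1/2" "1/2"] by (simp add: midpoint_def scaleR_right_distrib)
    then have "d\<^sup>2 \<le> (dist p (midpoint (f n) (f k)))\<^sup>2"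
      unfolding d_def by (intro power_mono infdist_le infdist_nonneg)
    then show "(dist (f n) (f k))\<^sup>2 \<le> 2 * inverse (real (Suc n)) + 2 * inverse (real (Suc k))"
      using dist_sq_midpoint [of "f n" "f k" p] fd [of n] fd [of k] by linarith
  next
    show "(\<lambda>n. 2 * inverse (real (Suc n))) \<longlonglongrightarrow> 0"
      using tendsto_mult_right_zero [OF LIMSEQ_inverse_real_of_nat] by simp
  qed
  then obtain m where "f \<longlonglongrightarrow> m"
    by (auto simp: Cauchy_convergent_iff convergent_def)
  have "m \<in> M"
    using closed_sequentially [OF \<open>closed M\<close>] fM \<open>f \<longlonglongrightarrow> m\<close> by blast
  have "(\<lambda>n. (dist p (f n))\<^sup>2) \<longlonglongrightarrow> (dist p m)\<^sup>2"
    using \<open>f \<longlonglongrightarrow> m\<close> by (intro tendsto_intros)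
  moreover have "(\<lambda>n. d\<^sup>2 + inverse (real (Suc n))) \<longlonglongrightarrow> d\<^sup>2"
    using tendsto_add [OF tendsto_const LIMSEQ_inverse_real_of_nat] by simp
  ultimately have "(dist p m)\<^sup>2 \<le> d\<^sup>2"
    by (rule LIMSEQ_le) (use fd less_imp_le in blast)
  then have "dist p m \<le> d"
    by (rule power2_le_imp_le) (simp add: d_def infdist_nonneg)
  show ?thesis
  proof (rule that [OF \<open>m \<in> M\<close>])
    fix u
    assume "u \<in> M"
    with \<open>dist p m \<le> d\<close> show "dist p m \<le> dist p u"
      unfolding d_def using infdist_le [of u M p] by linarith
  qed
qed

lemma quadratic_nonneg_imp_linear_coeff_0:
  fixes a b :: real
  assumes "a \<ge> 0" "\<And>t. 0 \<le> t\<^sup>2 * a - 2 * t * b"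
  shows "b = 0"
proof (cases "a = 0")
  case True
  then show ?thesis
    using assms(2) [of b] by (auto simp: mult_le_0_iff)
next
  case False
  with \<open>a \<ge> 0\<close> have "a > 0"
    by simp
  have "0 \<le> (b / a)\<^sup>2 * a - 2 * (b / a) * b"
    by (rule assms(2))
  also have "\<dots> = - (b\<^sup>2 / a)"
    using \<open>a > 0\<close> by (simp add: power2_eq_square field_simps)
  finally show ?thesis
    using \<open>a > 0\<close> by (simp add: divide_le_0_iff)
qed

lemma nearest_point_orthogonal:
  fixes M :: "'a::chilbert set"
  assumes "csubspace M" "m \<in> M" "\<And>u. u \<in> M \<Longrightarrow> dist p m \<le> dist p u" "w \<in> M"
  shows "cinner (p - m) w = 0"
proof -
  have Re_0: "Re (cinner (p - m) v) = 0" if "v \<in> M" for v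
  proof (rule quadratic_nonneg_imp_linear_coeff_0 [of "(norm v)\<^sup>2"])
    fix t :: real
    have "m + t *\<^sub>R v \<in> M"
      using assms(1,2) that by (intro csubspace_add csubspace_scaleR)
    then have "(norm (p - m))\<^sup>2 \<le> (norm ((p - m) - t *\<^sub>R v))\<^sup>2"
      using assms(3) by (force simp: dist_norm algebra_simps intro: power_mono)
    then show "0 \<le> t\<^sup>2 * (norm v)\<^sup>2 - 2 * t * Re (cinner (p - m) v)"
      unfolding norm_diff_scaleR_sq by simp
  qed simp
  have "Im (cinner (p - m) w) = Re (cinner (p - m) (cscale \<i> w))"
    by (simp add: cinner_cscale_right)
  also have "\<dots> = 0"
    using assms(1,4) by (intro Re_0 csubspace_cscale)
  finally show ?thesis
    using Re_0 [OF assms(4)] by (simp add: complex_eq_iff)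
qed

lemma orthogonal_projection_exists:
  fixes M :: "'a::chilbert set"
  assumes "csubspace M" "closed M"
  shows "\<exists>m\<in>M. \<forall>u\<in>M. cinner (p - m) u = 0"
proof -
  have "M \<noteq> {}"
    using csubspace_0 [OF assms(1)] by blast
  then obtain m where "m \<in> M" and nearest: "\<And>u. u \<in> M \<Longrightarrow> dist p m \<le> dist p u"
    using closed_convex_nearest_point [OF assms(2) csubspace_imp_convex [OF assms(1)]] by blast
  then show ?thesis
    using nearest_point_orthogonal [OF assms(1)] by blast
qed

lemma dense_if_orthogonal_complement_trivial:
  fixes S :: "'a::chilbert set"
  assumes "csubspace S" "\<And>z. (\<And>v. v \<in> S \<Longrightarrow> cinner z v = 0) \<Longrightarrow> z = 0"
  shows "closure S = UNIV"
proof -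
  have "y \<in> closure S" for y
  proof -
    obtain m where "m \<in> closure S" and orth: "\<forall>u\<in>closure S. cinner (y - m) u = 0"
      using orthogonal_projection_exists [OF csubspace_closure [OF assms(1)] closed_closure] by blast
    have "y - m = 0"
      using assms(2) orth closure_subset by blast
    with \<open>m \<in> closure S\<close> show ?thesis
      by simp
  qed
  then show ?thesis
    by blast
qed

section \<open>Orthonormal bases\<close>

definition orthonormal :: "(nat \<Rightarrow> 'a::chilbert) \<Rightarrow> bool" where
  "orthonormal e \<longleftrightarrow> (\<forall>n m. cinner (e n) (e m) = (if n = m then 1 else 0))"

lemma ONB_iff_orthonormal_total:
  "ONB e \<longleftrightarrow> orthonormal e \<and> (\<forall>x. (\<forall>n. cinner x (e n) = 0) \<longrightarrow> x = 0)"
  by (simp add: ONB_def orthonormal_def)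

lemma cinner_sum_orthonormal:
  assumes "orthonormal e" "finite F"
  shows "cinner (\<Sum>n\<in>F. cscale (c n) (e n)) (e m) = (if m \<in> F then c m else 0)"
  using assms by (simp add: orthonormal_def cinner_simps if_distrib [of "(*) _"] cong: if_cong)

lemma norm_sum_orthonormal_sq:
  assumes "orthonormal e" "finite F"
  shows "(norm (\<Sum>n\<in>F. cscale (c n) (e n)))\<^sup>2 = (\<Sum>n\<in>F. (cmod (c n))\<^sup>2)"
proof -
  let ?s = "\<Sum>n\<in>F. cscale (c n) (e n)"
  have "cinner ?s ?s = (\<Sum>n\<in>F. cnj (c n) * cinner ?s (e n))"
    by (simp add: cinner_sum_right cinner_cscale_right)
  also have "\<dots> = (\<Sum>n\<in>F. c n * cnj (c n))"
    using assms by (intro sum.cong) (simp_all add: cinner_sum_orthonormal mult.commute)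
  also have "\<dots> = complex_of_real (\<Sum>n\<in>F. (cmod (c n))\<^sup>2)"
    by (simp add: complex_norm_square [symmetric])
  finally show ?thesis
    unfolding Re_cinner_self [symmetric] by simp
qed

lemma Bessel_inequality_partial:
  assumes "orthonormal e"
  shows "(\<Sum>n<N. (cmod (cinner x (e n)))\<^sup>2) \<le> (norm x)\<^sup>2"
proof -
  define s where "s = (\<Sum>n<N. cscale (cinner x (e n)) (e n))"
  have "cinner (x - s) (e n) = 0" if "n < N" for n
    using cinner_sum_orthonormal [OF assms finite_lessThan, where c = "\<lambda>n. cinner x (e n)" and m = n] that
    by (simp add: s_def cinner_diff_left)
  then have "cinner (x - s) s = 0"
    by (simp add: s_def cinner_sum_right cinner_cscale_right)
  then have "(norm x)\<^sup>2 = (norm (x - s))\<^sup>2 + (norm s)\<^sup>2"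
    using cinner_commute [of "x - s" s]
    unfolding Re_cinner_self [symmetric] by (simp add: cinner_simps)
  also have "(norm s)\<^sup>2 = (\<Sum>n<N. (cmod (cinner x (e n)))\<^sup>2)"
    unfolding s_def using assms by (simp add: norm_sum_orthonormal_sq)
  finally show ?thesis
    by simp
qed

lemma summable_Bessel:
  assumes "orthonormal e"
  shows "summable (\<lambda>n. (cmod (cinner x (e n)))\<^sup>2)"
  using Bessel_inequality_partial [OF assms]
  by (intro summableI_nonneg_bounded [where x = "(norm x)\<^sup>2"]) simp_all

lemma summable_orthonormal_series:
  assumes "orthonormal e" "summable (\<lambda>n. (cmod (c n))\<^sup>2)"
  shows "summable (\<lambda>n. cscale (c n) (e n))"
  unfolding summable_Cauchy
proof (intro allI impI)
  fix r :: real
  assume "r > 0"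
  then obtain N where N: "\<forall>m\<ge>N. \<forall>n. norm (\<Sum>k\<in>{m..<n}. (cmod (c k))\<^sup>2) < r\<^sup>2"
    using assms(2) unfolding summable_Cauchy by (meson zero_less_power)
  have "norm (\<Sum>k\<in>{m..<n}. cscale (c k) (e k)) < r" if "m \<ge> N" for m n
  proof -
    have "(norm (\<Sum>k\<in>{m..<n}. cscale (c k) (e k)))\<^sup>2 < r\<^sup>2"
      using N that by (simp add: norm_sum_orthonormal_sq [OF assms(1)] sum_nonneg)
    then show ?thesis
      using \<open>r > 0\<close> by (simp add: power_less_imp_less_base)
  qed
  then show "\<exists>N. \<forall>m\<ge>N. \<forall>n. norm (\<Sum>k\<in>{m..<n}. cscale (c k) (e k)) < r"
    by blast
qed

lemma cinner_suminf_orthonormal: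
  assumes "orthonormal e" "summable (\<lambda>n. (cmod (c n))\<^sup>2)"
  shows "cinner (\<Sum>n. cscale (c n) (e n)) (e m) = c m"
proof -
  have "cinner (\<Sum>n. cscale (c n) (e n)) (e m) = (\<Sum>n. cinner (cscale (c n) (e n)) (e m))"
    using bounded_linear.suminf [OF bounded_bilinear.bounded_linear_left [OF bounded_bilinear_cinner]
        summable_orthonormal_series [OF assms]] .
  also have "\<dots> = (\<Sum>n. if n = m then c m else 0)"
    using assms(1) by (auto simp: orthonormal_def cinner_cscale_left intro!: arg_cong [where f = suminf])
  also have "\<dots> = c m"
    by (rule sums_unique [symmetric]) (rule sums_single)
  finally show ?thesis .
qed

lemma ONB_expansion:
  assumes "ONB e"
  shows "(\<lambda>n. cscale (cinner x (e n)) (e n)) sums x"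
proof -
  have on: "orthonormal e" and total: "\<And>z. (\<And>n. cinner z (e n) = 0) \<Longrightarrow> z = 0"
    using assms by (auto simp: ONB_iff_orthonormal_total)
  let ?y = "\<Sum>n. cscale (cinner x (e n)) (e n)"
  have "cinner (x - ?y) (e m) = 0" for m
    by (simp add: cinner_diff_left cinner_suminf_orthonormal [OF on summable_Bessel [OF on]])
  then have "?y = x"
    using total by fastforce
  have "(\<lambda>n. cscale (cinner x (e n)) (e n)) sums ?y"
    by (rule summable_sums [OF summable_orthonormal_series [OF on summable_Bessel [OF on]]])
  also note \<open>?y = x\<close>
  finally show ?thesis .
qed

lemma Parseval_identity:
  assumes "ONB e"
  shows "(\<lambda>k. cinner a (e k) * cinner (e k) b) sums cinner a b"
  using bounded_linear.sums [OF bounded_bilinear.bounded_linear_left [OF bounded_bilinear_cinner]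
      ONB_expansion [OF assms, of a], of b]
  by (simp add: cinner_cscale_left)

section \<open>Operators given by their graphs\<close>

lemma lin_op_imp_csubspace: "lin_op G \<Longrightarrow> csubspace G"
  unfolding lin_op_def csubspace_def by (auto simp: zero_prod_def cscale_prod_def)

lemma csubspace_Domain:
  assumes "csubspace (G :: ('a::chilbert \<times> 'b::chilbert) set)"
  shows "csubspace (Domain G)"
  unfolding csubspace_def
proof (intro conjI ballI allI impI)
  show "0 \<in> Domain G"
    using csubspace_0 [OF assms] by (force simp: zero_prod_def)
  show "x + y \<in> Domain G" if "x \<in> Domain G" "y \<in> Domain G" for x y
    using that csubspace_add [OF assms] by (force simp: Domain_iff)
  show "cscale a x \<in> Domain G" if "x \<in> Domain G" for a x
    using that csubspace_cscale [OF assms, of _ a] by (force simp: Domain_iff cscale_prod_def)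
qed

lemma csubspace_Range:
  assumes "csubspace (G :: ('a::chilbert \<times> 'b::chilbert) set)"
  shows "csubspace (Range G)"
  unfolding csubspace_def
proof (intro conjI ballI allI impI)
  show "0 \<in> Range G"
    using csubspace_0 [OF assms] by (force simp: zero_prod_def)
  show "x + y \<in> Range G" if "x \<in> Range G" "y \<in> Range G" for x y
    using that csubspace_add [OF assms] by (force simp: Range_iff)
  show "cscale a x \<in> Range G" if "x \<in> Range G" for a x
    using that csubspace_cscale [OF assms, of _ a] by (force simp: Range_iff cscale_prod_def)
qed

lemma adj_opD: "(y, z) \<in> adj_op G \<Longrightarrow> (x, w) \<in> G \<Longrightarrow> cinner w y = cinner x z"
  by (simp add: adj_op_def)

lemma adj_opD_commuted: "(y, z) \<in> adj_op G \<Longrightarrow> (x, w) \<in> G \<Longrightarrow> cinner y w = cinner z x"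
  by (metis adj_opD cinner_commute)

lemma adj_op_inv_opD: "(y, z) \<in> adj_op (inv_op G) \<Longrightarrow> (x, w) \<in> G \<Longrightarrow> cinner w z = cinner x y"
  by (simp add: adj_op_def inv_op_def)

lemma csubspace_adj_op: "csubspace (adj_op G)"
  by (auto simp: csubspace_def adj_op_def zero_prod_def cscale_prod_def cinner_add_right cinner_cscale_right)

lemma adj_op_inv_op_iff: "(y, z) \<in> adj_op (inv_op G) \<longleftrightarrow> (z, y) \<in> adj_op G"
  by (auto simp: adj_op_def inv_op_def)

text \<open>If \<open>z \<perp> D(T\<^sup>*)\<close>, project \<open>(0, z)\<close> onto the closed graph of \<open>T\<close>: the residual \<open>(-x, z - w)\<close> is
  orthogonal to the graph, i.e. \<open>(z - w, x) \<in> T\<^sup>*\<close>, and testing against \<open>z - w \<in> D(T\<^sup>*)\<close> forces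
  \<open>x = 0\<close> and \<open>z = w = T 0 = 0\<close>.\<close>
lemma orthogonal_Domain_adj_op_eq_0:
  assumes "lin_op T" "closed T" and orth: "\<And>v. v \<in> Domain (adj_op T) \<Longrightarrow> cinner z v = 0"
  shows "z = 0"
proof -
  obtain x w where "(x, w) \<in> T" and res_orth: "\<forall>u\<in>T. cinner ((0, z) - (x, w)) u = 0"
    using orthogonal_projection_exists [OF lin_op_imp_csubspace [OF assms(1)] assms(2), of "(0, z)"]
    by auto
  have res_orth': "cinner (z - w) v = cinner x u" if "(u, v) \<in> T" for u v
    using res_orth that by (force simp: cinner_Pair cinner_minus_left)
  have "cinner v (z - w) = cinner u x" if "(u, v) \<in> T" for u v
    using res_orth' [OF that] by (metis cinner_commute)
  then have "(z - w, x) \<in> adj_op T"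
    by (simp add: adj_op_def)
  then have "cinner z (z - w) = 0"
    using orth by blast
  moreover have "cinner x x = cinner (z - w) w"
    using res_orth' [OF \<open>(x, w) \<in> T\<close>] by simp
  ultimately have "cinner x x + cinner (z - w) (z - w) = 0"
    using cinner_commute [of z "z - w"] by (simp add: cinner_diff_right)
  then have "(norm x)\<^sup>2 + (norm (z - w))\<^sup>2 = 0"
    by (metis Re_cinner_self plus_complex.sel(1) zero_complex.sel(1))
  then have "x = 0" "z = w"
    by (simp_all add: add_nonneg_eq_0_iff)
  with \<open>(x, w) \<in> T\<close> show "z = 0"
    using assms(1) unfolding lin_op_def by blast
qed

lemma densely_defined_adj_op:
  assumes "lin_op T" "closed_op T"
  shows "densely_defined (adj_op T)"
  unfolding densely_defined_def dom_op_def
proof (rule dense_if_orthogonal_complement_trivial [OF csubspace_Domain [OF csubspace_adj_op]])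
  show "z = 0" if "\<And>v. v \<in> Domain (adj_op T) \<Longrightarrow> cinner z v = 0" for z
    using assms that unfolding closed_op_def by (rule orthogonal_Domain_adj_op_eq_0)
qed

lemma T_op_iff: "(a, b) \<in> T_op e \<xi> \<longleftrightarrow> a \<in> Dseq \<xi> \<and> b = (\<Sum>n. cscale (cinner a (\<xi> n)) (e n))"
  unfolding T_op_def by blast

lemma eq_inv_op_T_op:
  assumes "ONB e" and coeff: "\<And>a b n. (a, b) \<in> G \<Longrightarrow> cinner b (\<xi> n) = cinner a (e n)"
  shows "G = inv_op (restrict_op (T_op e \<xi>) (Range G))"
proof -
  have on: "orthonormal e"
    using assms(1) by (simp add: ONB_iff_orthonormal_total)
  have expand: "(\<Sum>n. cscale (cinner b (\<xi> n)) (e n)) = a" if "(a, b) \<in> G" for a b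
    using coeff [OF that] sums_unique [OF ONB_expansion [OF assms(1), of a]] by simp
  have Dseq: "b \<in> Dseq \<xi>" if "(a, b) \<in> G" for a b
    using coeff [OF that] summable_Bessel [OF on, of a] by (simp add: Dseq_def)
  show ?thesis
  proof (intro set_eqI iffI)
    fix p
    assume "p \<in> G"
    then show "p \<in> inv_op (restrict_op (T_op e \<xi>) (Range G))"
      using expand Dseq by (cases p) (force simp: inv_op_def restrict_op_def T_op_iff)
  next
    fix p
    assume "p \<in> inv_op (restrict_op (T_op e \<xi>) (Range G))"
    then show "p \<in> G"
      using expand by (cases p) (auto simp: inv_op_def restrict_op_def T_op_iff)
  qed
qed

lemma quasi_basis_Domain_adj_op_Range:
  assumes cp: "constructing_pair e T \<phi>" and \<psi>: "\<And>n. (e n, \<psi> n) \<in> adj_op (inv_op T)"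
  shows "quasi_basis (Domain (adj_op T)) (Range T) \<phi> \<psi>"
proof -
  from cp have "ONB e" "lin_op T" "closed_op T" and dense_Range: "closure (Range T) = UNIV"
    and e\<phi>: "\<And>n. (e n, \<phi> n) \<in> T"
    by (auto simp: constructing_pair_def densely_defined_def dom_op_def inv_op_def)
  then have on: "orthonormal e"
    by (simp add: ONB_iff_orthonormal_total)
  have subspace_Domain: "csubspace (Domain (adj_op T))"
    by (rule csubspace_Domain [OF csubspace_adj_op])
  have subspace_Range: "csubspace (Range T)"
    by (rule csubspace_Range [OF lin_op_imp_csubspace [OF \<open>lin_op T\<close>]])
  show ?thesis
    unfolding quasi_basis_def dense_csubspace_def
  proof (intro conjI ballI)
    show "biorthogonal \<phi> \<psi>"
      using on adj_op_inv_opD [OF \<psi> e\<phi>] by (simp add: biorthogonal_def orthonormal_def)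
    show "closure (Domain (adj_op T)) = UNIV"
      using densely_defined_adj_op [OF \<open>lin_op T\<close> \<open>closed_op T\<close>]
      by (simp add: densely_defined_def dom_op_def)
    show "Dspan \<psi> \<subseteq> Domain (adj_op T)"
      unfolding Dspan_def using \<psi>
      by (intro cspan_subset [OF subspace_Domain]) (auto simp: adj_op_inv_op_iff)
    show "Domain (adj_op T) \<subseteq> Dseq \<phi>"
      using adj_opD_commuted [OF _ e\<phi>] summable_Bessel [OF on] by (force simp: Dseq_def)
    show "Dspan \<phi> \<subseteq> Range T"
      unfolding Dspan_def using e\<phi> by (intro cspan_subset [OF subspace_Range]) auto
    show "Range T \<subseteq> Dseq \<psi>"
      using adj_op_inv_opD [OF \<psi>] summable_Bessel [OF on] by (force simp: Dseq_def)
  next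
    fix x y
    assume "x \<in> Domain (adj_op T)" "y \<in> Range T"
    then obtain z w where xz: "(x, z) \<in> adj_op T" and wy: "(w, y) \<in> T"
      by blast
    have "cinner x (\<phi> k) * cinner (\<psi> k) y = cinner z (e k) * cinner (e k) w" for k
      using adj_opD_commuted [OF xz e\<phi>] adj_op_inv_opD [OF \<psi> wy] cinner_commute by metis
    moreover have "cinner x y = cinner z w"
      using adj_opD_commuted [OF xz wy] .
    ultimately show "(\<lambda>k. cinner x (\<phi> k) * cinner (\<psi> k) y) sums cinner x y"
      using Parseval_identity [OF \<open>ONB e\<close>] by presburger
  qed (use subspace_Domain subspace_Range dense_Range in auto)
qed

theorem proposition3p4:
  fixes \<phi> \<psi> e :: "nat \<Rightarrow> 'a::chilbert" and T :: "('a \<times> 'a) set"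
  assumes "constructing_pair e T \<phi>"
    and "\<And>n. (e n, \<psi> n) \<in> adj_op (inv_op T)"
  shows "quasi_basis (dom_op (adj_op T)) (dom_op (inv_op T)) \<phi> \<psi>
    \<and> T = inv_op (restrict_op (T_op e \<psi>) (dom_op (inv_op T)))
    \<and> adj_op (inv_op T) = inv_op (restrict_op (T_op e \<phi>) (dom_op (adj_op T)))"
proof -
  from assms(1) have "ONB e" and e\<phi>: "\<And>n. (e n, \<phi> n) \<in> T"
    by (simp_all add: constructing_pair_def)
  have "T = inv_op (restrict_op (T_op e \<psi>) (Range T))"
    using \<open>ONB e\<close> adj_op_inv_opD [OF assms(2)] by (rule eq_inv_op_T_op)
  moreover have "adj_op (inv_op T) = inv_op (restrict_op (T_op e \<phi>) (Range (adj_op (inv_op T))))"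
    using \<open>ONB e\<close> adj_opD_commuted [OF _ e\<phi>]
    by (intro eq_inv_op_T_op) (auto simp: adj_op_inv_op_iff)
  moreover have "Range (adj_op (inv_op T)) = Domain (adj_op T)"
    by (auto simp: adj_op_inv_op_iff)
  ultimately show ?thesis
    using quasi_basis_Domain_adj_op_Range [OF assms] by (simp add: dom_op_def inv_op_def)
qed

end
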